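(* Let $\mathbb{K}$ be an infinite field and $P$ a generic sequence of $n$ homogeneous polynomials in $\mathbb{K}[x_1,\ldots,x_n]$, and let $G_1$ be the reduced Gröbner basis of $\langle P\rangle$ w.r.t. DRL. If the Moreno-Socías conjecture holds, then the number of dense columns of the multiplication matrix $T_1$ equals $|\{g\in G_1:\ x_1\mid\mathrm{lt}(g)\}|$.
   Context: DRL is the degree reverse lexicographic ordering with $x_1<\cdots<x_n$. A property holds for a generic sequence if it holds on a nonempty Zariski-open subset of the coefficient space. Let $B=[\epsilon_1,\ldots,\epsilon_D]$ be the DRL canonical basis of $\mathbb{K}[x_1,\ldots,x_n]/\langle P\rangle$. The $j$-th column of $T_1$ is the coordinate vector of the normal form of $x_1\epsilon_j$. This column is called sparse if $x_1\epsilon_j\in B$ and dense otherwise. A monomial ideal $J$ is weakly reverse lexicographic if, for each minimal generator $\mathbf{t}$, every term of the same total degree greater than $\mathbf{t}$ w.r.t. DRL lies in $J$. Moreno-Socías conjecture: for every infinite field and every generic sequence of $n$ polynomials in $n$ variables, the DRL leading term ideal of the ideal it generates is weakly reverse lexicographic. *)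

theory Defs
  imports "HOL-Library.Poly_Mapping"
begin

text \<open>Monomials in the variables x_1, x_2, ... are exponent vectors (index i = variable x_i);
  polynomials over a field 'a are finitely supported maps from monomials to coefficients.
  K[x_1..x_n] is the set of polynomials all of whose monomials only involve x_1..x_n.\<close>

type_synonym mon = "nat \<Rightarrow>\<^sub>0 nat"
type_synonym 'a mpoly = "mon \<Rightarrow>\<^sub>0 'a"

definition mdeg :: "mon \<Rightarrow> nat" where
  "mdeg t = (\<Sum>i\<in>Poly_Mapping.keys t. Poly_Mapping.lookup t i)"

definition is_mon :: "nat \<Rightarrow> mon \<Rightarrow> bool" where
  "is_mon n t \<longleftrightarrow> Poly_Mapping.keys t \<subseteq> {1..n}"

definition is_poly :: "nat \<Rightarrow> 'a::zero mpoly \<Rightarrow> bool" where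
  "is_poly n p \<longleftrightarrow> (\<forall>t\<in>Poly_Mapping.keys p. is_mon n t)"

definition homogeneous :: "nat \<Rightarrow> nat \<Rightarrow> 'a::zero mpoly \<Rightarrow> bool" where
  "homogeneous n d p \<longleftrightarrow> is_poly n p \<and> (\<forall>t\<in>Poly_Mapping.keys p. mdeg t = d)"

definition mdvd :: "mon \<Rightarrow> mon \<Rightarrow> bool" where
  "mdvd s t \<longleftrightarrow> (\<forall>i. Poly_Mapping.lookup s i \<le> Poly_Mapping.lookup t i)"

text \<open>DRL with x_1 < ... < x_n: s < t iff deg s < deg t, or the degrees agree and at the
  smallest variable index where s and t differ, s has the larger exponent.\<close>
definition drl_less :: "mon \<Rightarrow> mon \<Rightarrow> bool" where
  "drl_less s t \<longleftrightarrow> mdeg s < mdeg t \<or>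
     (mdeg s = mdeg t \<and> (\<exists>i. Poly_Mapping.lookup t i < Poly_Mapping.lookup s i \<and> (\<forall>j<i. Poly_Mapping.lookup s j = Poly_Mapping.lookup t j)))"

definition drl_le :: "mon \<Rightarrow> mon \<Rightarrow> bool" where
  "drl_le s t \<longleftrightarrow> s = t \<or> drl_less s t"

definition lt :: "'a::zero mpoly \<Rightarrow> mon" where
  "lt p = (THE t. t \<in> Poly_Mapping.keys p \<and> (\<forall>s\<in>Poly_Mapping.keys p. drl_le s t))"

definition lc :: "'a::zero mpoly \<Rightarrow> 'a" where
  "lc p = Poly_Mapping.lookup p (lt p)"

definition ideal_gen :: "nat \<Rightarrow> 'a::comm_ring_1 mpoly set \<Rightarrow> 'a mpoly set" where
  "ideal_gen n F = {p. \<exists>S c. finite S \<and> S \<subseteq> F \<and> (\<forall>f\<in>S. is_poly n (c f)) \<and>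
                         p = (\<Sum>f\<in>S. c f * f)}"

definition seq_ideal :: "nat \<Rightarrow> (nat \<Rightarrow> 'a::comm_ring_1 mpoly) \<Rightarrow> 'a mpoly set" where
  "seq_ideal n P = ideal_gen n (P ` {1..n})"

definition lt_ideal :: "'a::zero mpoly set \<Rightarrow> mon set" where
  "lt_ideal I = {t. \<exists>p\<in>I. p \<noteq> 0 \<and> lt p = t}"

definition canon_basis :: "nat \<Rightarrow> 'a::zero mpoly set \<Rightarrow> mon set" where
  "canon_basis n I = {t. is_mon n t \<and> t \<notin> lt_ideal I}"

definition x1 :: mon where "x1 = Poly_Mapping.single 1 1"

text \<open>Dense columns of T_1: basis elements e with x_1 e not in the basis.\<close>
definition dense_cols :: "nat \<Rightarrow> 'a::zero mpoly set \<Rightarrow> mon set" where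
  "dense_cols n I = {t \<in> canon_basis n I. t + x1 \<notin> canon_basis n I}"

definition reduced_GB :: "nat \<Rightarrow> 'a::field mpoly set \<Rightarrow> 'a mpoly set \<Rightarrow> bool" where
  "reduced_GB n I G \<longleftrightarrow> finite G \<and> G \<subseteq> I \<and> 0 \<notin> G \<and> (\<forall>g\<in>G. lc g = 1) \<and>
     (\<forall>p\<in>I. p \<noteq> 0 \<longrightarrow> (\<exists>g\<in>G. mdvd (lt g) (lt p))) \<and>
     (\<forall>g\<in>G. \<forall>g'\<in>G. g \<noteq> g' \<longrightarrow> (\<forall>t\<in>Poly_Mapping.keys g. \<not> mdvd (lt g') t))"

definition min_gen :: "mon set \<Rightarrow> mon \<Rightarrow> bool" where
  "min_gen J t \<longleftrightarrow> t \<in> J \<and> (\<forall>s\<in>J. mdvd s t \<longrightarrow> s = t)"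

definition weakly_revlex :: "nat \<Rightarrow> mon set \<Rightarrow> bool" where
  "weakly_revlex n J \<longleftrightarrow> (\<forall>t. min_gen J t \<longrightarrow>
      (\<forall>s. is_mon n s \<and> mdeg s = mdeg t \<and> drl_less t s \<longrightarrow> s \<in> J))"

text \<open>Coefficient space of sequences of n homogeneous polynomials of degrees d_1..d_n:
  coordinates are indexed by pairs (i, t), t a monomial of degree d_i in x_1..x_n.
  Points are functions vanishing outside this index set; polynomial functions on it are
  given by polynomials in variables indexed by such pairs.\<close>

definition coeff_index :: "nat \<Rightarrow> (nat \<Rightarrow> nat) \<Rightarrow> (nat \<times> mon) set" where
  "coeff_index n d = {(i, t). i \<in> {1..n} \<and> is_mon n t \<and> mdeg t = d i}"

definition coeff_space :: "nat \<Rightarrow> (nat \<Rightarrow> nat) \<Rightarrow> (nat \<times> mon \<Rightarrow> 'a::zero) set" where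
  "coeff_space n d = {a. \<forall>v. v \<notin> coeff_index n d \<longrightarrow> a v = 0}"

definition eval_cpoly :: "(((nat \<times> mon) \<Rightarrow>\<^sub>0 nat) \<Rightarrow>\<^sub>0 'a::comm_ring_1) \<Rightarrow> (nat \<times> mon \<Rightarrow> 'a) \<Rightarrow> 'a" where
  "eval_cpoly h a = (\<Sum>m\<in>Poly_Mapping.keys h. Poly_Mapping.lookup h m * (\<Prod>v\<in>Poly_Mapping.keys m. a v ^ Poly_Mapping.lookup m v))"

definition zariski_open :: "nat \<Rightarrow> (nat \<Rightarrow> nat) \<Rightarrow> (nat \<times> mon \<Rightarrow> 'a::comm_ring_1) set \<Rightarrow> bool" where
  "zariski_open n d U \<longleftrightarrow> (\<exists>S. U = coeff_space n d - {a \<in> coeff_space n d. \<forall>h\<in>S. eval_cpoly h a = 0})"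

definition coeff_vec :: "nat \<Rightarrow> (nat \<Rightarrow> 'a::zero mpoly) \<Rightarrow> (nat \<times> mon \<Rightarrow> 'a)" where
  "coeff_vec n P = (\<lambda>(i, t). if i \<in> {1..n} then Poly_Mapping.lookup (P i) t else 0)"

definition generic :: "nat \<Rightarrow> (nat \<Rightarrow> nat) \<Rightarrow> ((nat \<Rightarrow> 'a::comm_ring_1 mpoly) \<Rightarrow> bool) \<Rightarrow> bool" where
  "generic n d Q \<longleftrightarrow> (\<exists>U. zariski_open n d U \<and> U \<noteq> {} \<and>
      (\<forall>P. (\<forall>i\<in>{1..n}. homogeneous n (d i) (P i)) \<and> coeff_vec n P \<in> U \<longrightarrow> Q P))"

definition moreno_socias :: "'a::field itself \<Rightarrow> bool" where
  "moreno_socias _ \<longleftrightarrow> (\<forall>n d. generic n d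
      (\<lambda>P::nat \<Rightarrow> 'a mpoly. weakly_revlex n (lt_ideal (seq_ideal n P))))"

end

theory Submission
  imports Defs
begin

text \<open>Let \<open>J\<close> be the leading term ideal and \<open>t\<close> a standard monomial with \<open>t x\<^sub>1\<close> in \<open>J\<close>, so that
  some minimal generator \<open>u\<close> of \<open>J\<close> divides \<open>t x\<^sub>1\<close> but not \<open>t\<close>. If \<open>u \<noteq> t x\<^sub>1\<close>, trading one factor
  \<open>x\<^sub>1\<close> of \<open>u\<close> for a variable \<open>x\<^sub>j\<close> whose exponent in \<open>u\<close> is smaller than in \<open>t\<close> yields a monomial of
  the same degree that is DRL-larger than \<open>u\<close>, hence in \<open>J\<close> because \<open>J\<close> is weakly reverse
  lexicographic; but it divides \<open>t\<close>, which is standard. So \<open>t \<mapsto> t x\<^sub>1\<close> is a bijection from the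
  dense columns onto the minimal generators divisible by \<open>x\<^sub>1\<close>, and these are exactly the leading
  terms of the reduced Groebner basis divisible by \<open>x\<^sub>1\<close>.\<close>

abbreviation "lookup \<equiv> Poly_Mapping.lookup"
abbreviation "keys \<equiv> Poly_Mapping.keys"
abbreviation "single \<equiv> Poly_Mapping.single"

lemma mdeg_eq_sum: "finite A \<Longrightarrow> keys t \<subseteq> A \<Longrightarrow> mdeg t = (\<Sum>i\<in>A. lookup t i)"
  unfolding mdeg_def by (rule sum.mono_neutral_left) (auto simp: in_keys_iff)

lemma mdeg_add: "mdeg (s + t) = mdeg s + mdeg t"
proof -
  let ?A = "keys s \<union> keys t"
  have "mdeg (s + t) = (\<Sum>i\<in>?A. lookup (s + t) i)"
    by (rule mdeg_eq_sum) (use keys_add[of s t] in auto)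
  also have "\<dots> = (\<Sum>i\<in>?A. lookup s i) + (\<Sum>i\<in>?A. lookup t i)"
    by (simp add: lookup_add sum.distrib)
  also have "\<dots> = mdeg s + mdeg t"
    using mdeg_eq_sum[of ?A s] mdeg_eq_sum[of ?A t] by simp
  finally show ?thesis .
qed

lemma mdeg_single: "mdeg (single i k) = k"
  by (simp add: mdeg_def)

lemma mdeg_eq_0_iff: "mdeg t = 0 \<longleftrightarrow> t = 0"
  unfolding mdeg_def by (auto simp: in_keys_iff intro: poly_mapping_eqI)

lemma lookup_x1: "lookup x1 i = (if i = 1 then 1 else 0)"
  by (simp add: x1_def lookup_single)

lemma mdvd_refl: "mdvd s s"
  by (simp add: mdvd_def)

lemma mdvd_trans: "mdvd s t \<Longrightarrow> mdvd t u \<Longrightarrow> mdvd s u"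
  unfolding mdvd_def using order_trans by blast

lemma mdvd_antisym: "mdvd s t \<Longrightarrow> mdvd t s \<Longrightarrow> s = t"
  unfolding mdvd_def by (metis le_antisym poly_mapping_eqI)

lemma mdvd_add_left: "mdvd s (u + s)"
  by (simp add: mdvd_def lookup_add)

lemma mdvd_imp_diff_add: "mdvd s t \<Longrightarrow> t = (t - s) + s"
  unfolding mdvd_def by (intro poly_mapping_eqI) (simp add: lookup_add lookup_minus)

lemma mdvd_mdeg_le_imp_eq:
  assumes "mdvd s t" "mdeg t \<le> mdeg s"
  shows "s = t"
proof -
  have "mdeg t = mdeg (t - s) + mdeg s"
    using mdvd_imp_diff_add[OF assms(1)] mdeg_add by metis
  then have "t - s = 0"
    using assms(2) mdeg_eq_0_iff by simp
  then show ?thesis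
    using mdvd_imp_diff_add[OF assms(1)] by simp
qed

lemma is_mon_add: "is_mon n s \<Longrightarrow> is_mon n t \<Longrightarrow> is_mon n (s + t)"
  unfolding is_mon_def using keys_add[of s t] by blast

lemma is_mon_diff: "is_mon n s \<Longrightarrow> is_mon n (s - t)"
  unfolding is_mon_def by (auto simp: in_keys_iff lookup_minus)

lemma is_mon_single: "i \<in> {1..n} \<Longrightarrow> is_mon n (single i k)"
  by (simp add: is_mon_def)

subsection \<open>The DRL order and leading terms\<close>

definition revlex_less :: "mon \<Rightarrow> mon \<Rightarrow> bool" where
  "revlex_less s t \<longleftrightarrow> (\<exists>i. lookup t i < lookup s i \<and> (\<forall>j<i. lookup s j = lookup t j))"

lemma drl_less_iff_revlex: "drl_less s t \<longleftrightarrow> mdeg s < mdeg t \<or> (mdeg s = mdeg t \<and> revlex_less s t)"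
  unfolding drl_less_def revlex_less_def by simp

lemma revlex_less_asym: "revlex_less s t \<Longrightarrow> \<not> revlex_less t s"
  unfolding revlex_less_def by (metis less_asym linorder_neqE_nat)

lemma revlex_less_trans: "revlex_less s t \<Longrightarrow> revlex_less t u \<Longrightarrow> revlex_less s u"
  unfolding revlex_less_def
proof (elim exE conjE)
  fix i k
  assume st: "lookup t i < lookup s i" "\<forall>j<i. lookup s j = lookup t j"
    and tu: "lookup u k < lookup t k" "\<forall>j<k. lookup t j = lookup u j"
  show "\<exists>i. lookup u i < lookup s i \<and> (\<forall>j<i. lookup s j = lookup u j)"
  proof (cases i k rule: linorder_cases)
    case less then show ?thesis using st tu by (intro exI[of _ i]) auto
  next
    case equal then show ?thesis using st tu by (intro exI[of _ i]) auto
  next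
    case greater then show ?thesis using st tu by (intro exI[of _ k]) auto
  qed
qed

lemma revlex_less_total: "s \<noteq> t \<Longrightarrow> revlex_less s t \<or> revlex_less t s"
proof -
  assume "s \<noteq> t"
  then have ex: "\<exists>i. lookup s i \<noteq> lookup t i"
    by (meson poly_mapping_eqI)
  define i where "i = (LEAST i. lookup s i \<noteq> lookup t i)"
  have "lookup s i \<noteq> lookup t i"
    unfolding i_def by (rule LeastI_ex[OF ex])
  moreover have "\<forall>j<i. lookup s j = lookup t j"
    unfolding i_def using not_less_Least by blast
  ultimately show ?thesis
    unfolding revlex_less_def by (metis linorder_neqE_nat)
qed

lemma revlex_less_add: "revlex_less s t \<Longrightarrow> revlex_less (s + m) (t + m)"
  unfolding revlex_less_def by (auto simp: lookup_add)

lemma drl_le_antisym: "drl_le s t \<Longrightarrow> drl_le t s \<Longrightarrow> s = t"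
  unfolding drl_le_def drl_less_iff_revlex using revlex_less_asym by auto

lemma drl_le_trans: "drl_le s t \<Longrightarrow> drl_le t u \<Longrightarrow> drl_le s u"
  unfolding drl_le_def drl_less_iff_revlex using revlex_less_trans by auto

lemma drl_le_total: "drl_le s t \<or> drl_le t s"
  unfolding drl_le_def drl_less_iff_revlex using revlex_less_total by (metis linorder_neqE_nat)

lemma drl_le_add: "drl_le s t \<Longrightarrow> drl_le (s + m) (t + m)"
  unfolding drl_le_def drl_less_iff_revlex using revlex_less_add by (auto simp: mdeg_add)

lemma finite_drl_max: "finite A \<Longrightarrow> A \<noteq> {} \<Longrightarrow> \<exists>t\<in>A. \<forall>s\<in>A. drl_le s t"
proof (induction A rule: finite_ne_induct)
  case (singleton x)
  then show ?case by (simp add: drl_le_def)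
next
  case (insert x F)
  then obtain t where t: "t \<in> F" "\<forall>s\<in>F. drl_le s t" by blast
  show ?case
  proof (cases "drl_le x t")
    case True
    then show ?thesis using t by auto
  next
    case False
    then have "\<forall>s\<in>F. drl_le s x"
      using t drl_le_total drl_le_trans by blast
    then show ?thesis by (auto simp: drl_le_def)
  qed
qed

lemma lt_eqI: "t \<in> keys p \<Longrightarrow> (\<And>s. s \<in> keys p \<Longrightarrow> drl_le s t) \<Longrightarrow> lt p = t"
  unfolding lt_def by (rule the_equality) (auto intro: drl_le_antisym)

lemma lt_in_keys_and_max:
  assumes "p \<noteq> 0"
  shows "lt p \<in> keys p \<and> (\<forall>s\<in>keys p. drl_le s (lt p))"
proof -
  obtain t where "t \<in> keys p" "\<forall>s\<in>keys p. drl_le s t"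
    using finite_drl_max[of "keys p"] assms by auto
  then show ?thesis
    using lt_eqI[of t p] by simp
qed

lemma lt_in_keys: "p \<noteq> 0 \<Longrightarrow> lt p \<in> keys p"
  using lt_in_keys_and_max by blast

lemma lookup_single_one_mult:
  "lookup (single (m::mon) (1::'a::comm_semiring_1) * p) (m + t) = lookup p t"
proof -
  have "lookup (single m (1::'a) * p) (m + t) = (\<Sum>q. lookup p q when m + t = m + q)"
    by (simp add: lookup_mult lookup_single when_mult)
  also have "\<dots> = (\<Sum>q. lookup p q when t = q)"
    by simp
  finally show ?thesis by simp
qed

lemma keys_single_one_mult:
  "keys (single (m::mon) (1::'a::comm_semiring_1) * p) = (+) m ` keys p"
proof
  show "keys (single m 1 * p) \<subseteq> (+) m ` keys p"
    using keys_mult[of "single m (1::'a)" p] by auto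
  show "(+) m ` keys p \<subseteq> keys (single m 1 * p)"
    by (auto simp: lookup_single_one_mult in_keys_iff)
qed

lemma lt_single_one_mult:
  assumes "p \<noteq> (0::'a::comm_semiring_1 mpoly)"
  shows "single m 1 * p \<noteq> 0" and "lt (single m 1 * p) = m + lt p"
proof -
  have keys: "keys (single m (1::'a) * p) = (+) m ` keys p"
    by (rule keys_single_one_mult)
  have "m + lt p \<in> keys (single m 1 * p)"
    using keys lt_in_keys[OF assms] by auto
  then show "single m 1 * p \<noteq> 0" by auto
  show "lt (single m 1 * p) = m + lt p"
  proof (rule lt_eqI)
    show "m + lt p \<in> keys (single m 1 * p)" by fact
    fix s assume "s \<in> keys (single m 1 * p)"
    then show "drl_le s (m + lt p)"
      using keys lt_in_keys_and_max[OF assms] drl_le_add[of _ "lt p" m] by (auto simp: add.commute)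
  qed
qed

lemma is_poly_add: "is_poly n p \<Longrightarrow> is_poly n q \<Longrightarrow> is_poly n (p + q)"
  unfolding is_poly_def using keys_add[of p q] by blast

lemma is_poly_mult:
  "is_poly n p \<Longrightarrow> is_poly n (q::'a::comm_semiring_1 mpoly) \<Longrightarrow> is_poly n (p * q)"
  unfolding is_poly_def using keys_mult[of p q] is_mon_add by blast

lemma is_poly_sum: "finite S \<Longrightarrow> (\<And>f. f \<in> S \<Longrightarrow> is_poly n (h f)) \<Longrightarrow> is_poly n (\<Sum>f\<in>S. h f)"
proof (induction S rule: finite_induct)
  case empty
  then show ?case by (simp add: is_poly_def)
next
  case (insert x F)
  then show ?case by (simp add: is_poly_add)
qed

lemma ideal_gen_is_poly:
  assumes "\<And>f. f \<in> F \<Longrightarrow> is_poly n f" and "p \<in> ideal_gen n (F::'a::comm_ring_1 mpoly set)"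
  shows "is_poly n p"
proof -
  obtain S c where "finite S" "S \<subseteq> F" "\<forall>f\<in>S. is_poly n (c f)" "p = (\<Sum>f\<in>S. c f * f)"
    using assms(2) unfolding ideal_gen_def by blast
  then show ?thesis
    using assms(1) by (auto intro!: is_poly_sum is_poly_mult)
qed

lemma ideal_gen_single_one_mult:
  assumes "is_mon n m" and "p \<in> ideal_gen n (F::'a::comm_ring_1 mpoly set)"
  shows "single m 1 * p \<in> ideal_gen n F"
proof -
  obtain S c where S: "finite S" "S \<subseteq> F" "\<forall>f\<in>S. is_poly n (c f)" "p = (\<Sum>f\<in>S. c f * f)"
    using assms(2) unfolding ideal_gen_def by blast
  have "is_poly n (single m (1::'a))"
    using assms(1) by (simp add: is_poly_def)
  moreover have "single m 1 * p = (\<Sum>f\<in>S. (single m 1 * c f) * f)"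
    by (simp add: S(4) sum_distrib_left mult.assoc)
  ultimately show ?thesis
    unfolding ideal_gen_def using S
    by (intro CollectI exI[of _ S] exI[of _ "\<lambda>f. single m 1 * c f"]) (auto intro: is_poly_mult)
qed

definition mon_ideal :: "nat \<Rightarrow> mon set \<Rightarrow> bool" where
  "mon_ideal n J \<longleftrightarrow> (\<forall>t\<in>J. is_mon n t) \<and> (\<forall>s t. t \<in> J \<longrightarrow> is_mon n s \<longrightarrow> s + t \<in> J)"

lemma mon_ideal_lt_ideal:
  fixes I :: "'a::comm_semiring_1 mpoly set"
  assumes "\<And>p. p \<in> I \<Longrightarrow> is_poly n p"
    and "\<And>m p. is_mon n m \<Longrightarrow> p \<in> I \<Longrightarrow> single m 1 * p \<in> I"
  shows "mon_ideal n (lt_ideal I)"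
  unfolding mon_ideal_def
proof (intro conjI allI ballI impI)
  fix t assume "t \<in> lt_ideal I"
  then obtain p where "p \<in> I" "p \<noteq> 0" "lt p = t"
    unfolding lt_ideal_def by blast
  then show "is_mon n t"
    using assms(1) lt_in_keys unfolding is_poly_def by blast
next
  fix s t assume "t \<in> lt_ideal I" "is_mon n s"
  then obtain p where "p \<in> I" "p \<noteq> 0" "lt p = t"
    unfolding lt_ideal_def by blast
  then show "s + t \<in> lt_ideal I"
    using assms(2)[OF \<open>is_mon n s\<close>] lt_single_one_mult[of p s]
    unfolding lt_ideal_def by blast
qed

lemma mon_ideal_lt_ideal_gen:
  "(\<And>f. f \<in> F \<Longrightarrow> is_poly n f) \<Longrightarrow> mon_ideal n (lt_ideal (ideal_gen n (F::'a::comm_ring_1 mpoly set)))"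
  by (rule mon_ideal_lt_ideal) (auto intro: ideal_gen_is_poly ideal_gen_single_one_mult)

subsection \<open>Minimal generators of weakly reverse lexicographic ideals\<close>

lemma min_gen_dvd_exists:
  assumes "t \<in> J"
  obtains u where "min_gen J u" "mdvd u t"
proof -
  obtain u where u: "u \<in> J" "mdvd u t" and least: "\<And>s. s \<in> J \<Longrightarrow> mdvd s t \<Longrightarrow> mdeg u \<le> mdeg s"
    using ex_has_least_nat[of "\<lambda>s. s \<in> J \<and> mdvd s t" t mdeg] assms mdvd_refl by blast
  have "min_gen J u"
    unfolding min_gen_def
    using u least mdvd_trans mdvd_mdeg_le_imp_eq by blast
  then show ?thesis using that u(2) by blast
qed

lemma lookup_exchange_x1:
  "lookup (u - x1 + single j 1) i = lookup u i - (if i = 1 then 1 else 0) + (if i = j then 1 else 0)"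
  by (simp add: lookup_add lookup_minus lookup_x1 lookup_single when_def)

lemma weakly_revlex_exchange:
  assumes wr: "weakly_revlex n J" and u: "min_gen J u" "is_mon n u" "0 < lookup u 1"
    and j: "j \<in> {1..n}"
  shows "u - x1 + single j 1 \<in> J"
proof (cases "j = 1")
  case True
  have "lookup (u - x1 + single j 1) i = lookup u i" for i
    using lookup_exchange_x1[of u j i] True u(3) by simp
  then have "u - x1 + single j 1 = u"
    by (rule poly_mapping_eqI)
  then show ?thesis
    using u(1) unfolding min_gen_def by simp
next
  case False
  define s where "s = u - x1 + single j 1"
  have "mdvd x1 u"
    using u(3) by (simp add: mdvd_def lookup_x1)
  then have "mdeg u = mdeg (u - x1) + 1"
    using mdvd_imp_diff_add mdeg_add mdeg_single unfolding x1_def by metis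
  then have deg: "mdeg s = mdeg u"
    unfolding s_def by (simp add: mdeg_add mdeg_single)
  have "lookup s 1 < lookup u 1"
    using lookup_exchange_x1[of u j 1] False u(3) unfolding s_def by simp
  moreover have "lookup s 0 = lookup u 0"
    using lookup_exchange_x1[of u j 0] j unfolding s_def by simp
  ultimately have "drl_less u s"
    unfolding drl_less_def using deg by (intro disjI2 conjI exI[of _ 1]) auto
  moreover have "is_mon n s"
    unfolding s_def using u(2) j by (intro is_mon_add is_mon_diff is_mon_single)
  ultimately show ?thesis
    using wr u(1) deg unfolding weakly_revlex_def min_gen_def s_def by blast
qed

lemma min_gen_dvd_add_x1_eq:
  assumes J: "mon_ideal n J" "weakly_revlex n J"
    and u: "min_gen J u" "mdvd u (t + x1)"
    and t: "is_mon n t" "t \<notin> J"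
  shows "u = t + x1"
proof (rule ccontr)
  assume ne: "u \<noteq> t + x1"
  have up: "v \<in> J" if "w \<in> J" "mdvd w v" "is_mon n v" for v w
  proof -
    have "(v - w) + w \<in> J"
      using J(1) that(1) is_mon_diff[OF that(3)] unfolding mon_ideal_def by blast
    then show ?thesis
      using mdvd_imp_diff_add[OF that(2)] by simp
  qed
  have u_mon: "is_mon n u"
    using J(1) u(1) unfolding mon_ideal_def min_gen_def by blast
  have le: "lookup u i \<le> lookup t i + (if i = 1 then 1 else 0)" for i
    using u(2) unfolding mdvd_def by (simp add: lookup_add lookup_x1)
  have "\<not> mdvd u t"
    using up u(1) t unfolding min_gen_def by blast
  then obtain i where "lookup t i < lookup u i"
    unfolding mdvd_def by (auto simp: not_le)
  then have u1: "lookup u 1 = lookup t 1 + 1"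
    using le[of i] le[of 1] by (cases "i = 1") auto
  obtain j where "lookup u j \<noteq> lookup (t + x1) j"
    using ne by (meson poly_mapping_eqI)
  then have j1: "j \<noteq> 1" and j: "lookup u j < lookup t j"
    using u1 le[of j] by (auto simp: lookup_add lookup_x1 split: if_splits)
  then have "j \<in> keys t"
    by (simp add: in_keys_iff)
  then have "j \<in> {1..n}"
    using t(1) unfolding is_mon_def by blast
  then have "u - x1 + single j 1 \<in> J"
    using weakly_revlex_exchange[OF J(2) u(1) u_mon] u1 by simp
  moreover have "mdvd (u - x1 + single j 1) t"
    unfolding mdvd_def
  proof
    fix i
    show "lookup (u - x1 + single j 1) i \<le> lookup t i"
      using lookup_exchange_x1[of u j i] le[of i] u1 j j1 by auto
  qed
  ultimately show False
    using up t by blast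
qed

lemma bij_betw_add_x1_min_gen:
  assumes J: "mon_ideal n J" "weakly_revlex n J"
  shows "bij_betw (\<lambda>t. t + x1) {t. is_mon n t \<and> t \<notin> J \<and> t + x1 \<in> J} {u. min_gen J u \<and> mdvd x1 u}"
proof (rule bij_betw_imageI)
  show "inj_on (\<lambda>t. t + x1) {t. is_mon n t \<and> t \<notin> J \<and> t + x1 \<in> J}"
    by (rule inj_onI) simp
  show "(\<lambda>t. t + x1) ` {t. is_mon n t \<and> t \<notin> J \<and> t + x1 \<in> J} = {u. min_gen J u \<and> mdvd x1 u}"
  proof (intro equalityI subsetI)
    fix v assume "v \<in> (\<lambda>t. t + x1) ` {t. is_mon n t \<and> t \<notin> J \<and> t + x1 \<in> J}"
    then obtain t where v: "v = t + x1" and t: "is_mon n t" "t \<notin> J" "t + x1 \<in> J"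
      by blast
    obtain u where u: "min_gen J u" "mdvd u (t + x1)"
      using min_gen_dvd_exists[OF t(3)] .
    then have "u = v"
      using min_gen_dvd_add_x1_eq[OF J u t(1,2)] v by simp
    then show "v \<in> {u. min_gen J u \<and> mdvd x1 u}"
      using u(1) v mdvd_add_left by simp
  next
    fix u assume "u \<in> {u. min_gen J u \<and> mdvd x1 u}"
    then have u: "min_gen J u" "mdvd x1 u" by auto
    let ?t = "u - x1"
    have u_eq: "u = ?t + x1"
      using mdvd_imp_diff_add[OF u(2)] .
    have "is_mon n ?t"
      using J(1) u(1) is_mon_diff unfolding mon_ideal_def min_gen_def by blast
    moreover have "?t \<notin> J"
    proof
      assume "?t \<in> J"
      moreover have "mdvd ?t u"
        by (simp add: mdvd_def lookup_minus)
      ultimately have "?t + x1 = ?t"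
        using u(1) u_eq unfolding min_gen_def by metis
      then have "lookup (?t + x1) 1 = lookup ?t 1"
        by simp
      then show False
        by (simp add: lookup_add lookup_x1)
    qed
    ultimately show "u \<in> (\<lambda>t. t + x1) ` {t. is_mon n t \<and> t \<notin> J \<and> t + x1 \<in> J}"
      using u(1) u_eq unfolding min_gen_def by (intro image_eqI[of _ _ ?t]) auto
  qed
qed

lemma reduced_GB_lt_bij_min_gen:
  assumes "reduced_GB n I G"
  shows "bij_betw lt {g\<in>G. Q (lt g)} {t. min_gen (lt_ideal I) t \<and> Q t}"
proof -
  have G: "G \<subseteq> I" "0 \<notin> G" "\<And>p. p \<in> I \<Longrightarrow> p \<noteq> 0 \<Longrightarrow> \<exists>g\<in>G. mdvd (lt g) (lt p)"
    and reduced: "\<And>g g' t. g \<in> G \<Longrightarrow> g' \<in> G \<Longrightarrow> g \<noteq> g' \<Longrightarrow> t \<in> keys g \<Longrightarrow> \<not> mdvd (lt g') t"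
    using assms unfolding reduced_GB_def by auto
  have lt_dvd_imp_eq: "g' = g" if "g \<in> G" "g' \<in> G" "mdvd (lt g') (lt g)" for g g'
  proof (rule ccontr)
    have "g \<noteq> 0"
      using that(1) G(2) by auto
    then have "lt g \<in> keys g"
      by (rule lt_in_keys)
    moreover assume "g' \<noteq> g"
    ultimately show False
      using reduced[OF that(1,2)] that(3) by auto
  qed
  have lt_mem: "lt g \<in> lt_ideal I" if "g \<in> G" for g
    using that G(1,2) unfolding lt_ideal_def by (auto intro!: bexI[of _ g])
  have lt_dvd: "\<exists>g\<in>G. mdvd (lt g) t" if "t \<in> lt_ideal I" for t
    using that G(3) unfolding lt_ideal_def by auto
  show ?thesis
  proof (rule bij_betw_imageI)
    show "inj_on lt {g\<in>G. Q (lt g)}"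
    proof (rule inj_onI)
      fix g g' assume "g \<in> {g\<in>G. Q (lt g)}" "g' \<in> {g\<in>G. Q (lt g)}" "lt g = lt g'"
      then show "g = g'"
        using lt_dvd_imp_eq[of g' g] mdvd_refl by simp
    qed
    show "lt ` {g\<in>G. Q (lt g)} = {t. min_gen (lt_ideal I) t \<and> Q t}"
    proof (intro equalityI subsetI)
      fix t assume "t \<in> lt ` {g\<in>G. Q (lt g)}"
      then obtain g where g: "g \<in> G" "Q (lt g)" "t = lt g" by blast
      have "min_gen (lt_ideal I) (lt g)"
        unfolding min_gen_def
      proof (intro conjI ballI impI)
        show "lt g \<in> lt_ideal I" using lt_mem[OF g(1)] .
        fix s assume "s \<in> lt_ideal I" "mdvd s (lt g)"
        then obtain g' where "g' \<in> G" "mdvd (lt g') s" "mdvd s (lt g)"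
          using lt_dvd by blast
        then have "g' = g"
          using lt_dvd_imp_eq[OF g(1)] mdvd_trans by blast
        then show "s = lt g"
          using \<open>mdvd (lt g') s\<close> \<open>mdvd s (lt g)\<close> mdvd_antisym by blast
      qed
      then show "t \<in> {t. min_gen (lt_ideal I) t \<and> Q t}" using g by simp
    next
      fix t assume t: "t \<in> {t. min_gen (lt_ideal I) t \<and> Q t}"
      then obtain g where "g \<in> G" "mdvd (lt g) t"
        using lt_dvd unfolding min_gen_def by blast
      then have "lt g = t"
        using t lt_mem unfolding min_gen_def by blast
      then show "t \<in> lt ` {g\<in>G. Q (lt g)}"
        using \<open>g \<in> G\<close> t by blast
    qed
  qed
qed

lemma dense_cols_eq:
  assumes "n \<ge> 1"
  shows "dense_cols n I = {t. is_mon n t \<and> t \<notin> lt_ideal I \<and> t + x1 \<in> lt_ideal I}"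
proof -
  have "is_mon n x1"
    using assms unfolding x1_def by (simp add: is_mon_single)
  then show ?thesis
    unfolding dense_cols_def canon_basis_def by (auto intro: is_mon_add)
qed

lemma card_dense_cols_eq_card_reduced_GB_x1:
  assumes "reduced_GB n I G" "mon_ideal n (lt_ideal I)" "weakly_revlex n (lt_ideal I)" "n \<ge> 1"
  shows "card (dense_cols n I) = card {g \<in> G. mdvd x1 (lt g)}"
proof -
  have "card (dense_cols n I) = card {u. min_gen (lt_ideal I) u \<and> mdvd x1 u}"
    unfolding dense_cols_eq[OF assms(4)]
    by (rule bij_betw_same_card[OF bij_betw_add_x1_min_gen[OF assms(2,3)]])
  also have "\<dots> = card {g \<in> G. mdvd x1 (lt g)}"
    by (rule bij_betw_same_card[OF reduced_GB_lt_bij_min_gen[OF assms(1)], symmetric])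
  finally show ?thesis .
qed

theorem corollary6p7:
  fixes n :: nat and d :: "nat \<Rightarrow> nat"
  assumes "infinite (UNIV :: 'a::field set)"
    and "n \<ge> 1"
    and "moreno_socias TYPE('a)"
  shows "generic n d (\<lambda>P::nat \<Rightarrow> 'a mpoly. \<forall>G. reduced_GB n (seq_ideal n P) G \<longrightarrow>
            card (dense_cols n (seq_ideal n P)) = card {g \<in> G. mdvd x1 (lt g)})"
proof -
  have "generic n d (\<lambda>P::nat \<Rightarrow> 'a mpoly. weakly_revlex n (lt_ideal (seq_ideal n P)))"
    using assms(3) unfolding moreno_socias_def by blast
  then obtain U where U: "zariski_open n d U" "U \<noteq> {}"
    and wr: "\<And>P::nat \<Rightarrow> 'a mpoly. (\<forall>i\<in>{1..n}. homogeneous n (d i) (P i)) \<and> coeff_vec n P \<in> U \<Longrightarrow>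
        weakly_revlex n (lt_ideal (seq_ideal n P))"
    unfolding generic_def by blast
  have "card (dense_cols n (seq_ideal n P)) = card {g \<in> G. mdvd x1 (lt g)}"
    if P: "(\<forall>i\<in>{1..n}. homogeneous n (d i) (P i)) \<and> coeff_vec n P \<in> U"
      and G: "reduced_GB n (seq_ideal n P) G" for P :: "nat \<Rightarrow> 'a mpoly" and G
  proof (rule card_dense_cols_eq_card_reduced_GB_x1[OF G _ wr[OF P] assms(2)])
    show "mon_ideal n (lt_ideal (seq_ideal n P))"
      unfolding seq_ideal_def using P by (intro mon_ideal_lt_ideal_gen) (auto simp: homogeneous_def)
  qed
  then show ?thesis
    unfolding generic_def using U by (intro exI[of _ U]) auto
qed

end
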